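(* Let $F:(0,\infty)\to(0,\infty)$ be strictly decreasing and let $(x_n)_{n\in\mathbb Z}$ be an equilibrium configuration for $F$. Let $k\le m$ be integers and $S=\{k,k+1,\dots,m\}$. For $i\in S$ let $$G_i=\sum_{j\in S,\,j<i}F(x_i-x_j)-\sum_{j\in S,\,j>i}F(x_j-x_i)$$ be the signed force (positive meaning to the right) exerted on the particle at $x_i$ by the particles of $S$ only. Then $G_k\le G_{k+1}\le\dots\le G_m$.
   Context: A configuration is a strictly increasing bi-infinite sequence $(x_n)_{n\in\mathbb Z}$ of reals. The particle at $x_n$ is in equilibrium if $\sum_{m<n}F(x_n-x_m)$ and $\sum_{m>n}F(x_m-x_n)$ are both finite and equal. An equilibrium configuration is one in which every particle is in equilibrium. *)

theory Defs
  imports "HOL-Analysis.Analysis"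
begin

definition configuration :: "(int \<Rightarrow> real) \<Rightarrow> bool" where
  "configuration x \<longleftrightarrow> strict_mono x"

definition in_equilibrium :: "(real \<Rightarrow> real) \<Rightarrow> (int \<Rightarrow> real) \<Rightarrow> int \<Rightarrow> bool" where
  "in_equilibrium F x n \<longleftrightarrow>
     (\<lambda>m. F (x n - x m)) summable_on {..<n} \<and>
     (\<lambda>m. F (x m - x n)) summable_on {n<..} \<and>
     (\<Sum>\<^sub>\<infinity>m\<in>{..<n}. F (x n - x m)) = (\<Sum>\<^sub>\<infinity>m\<in>{n<..}. F (x m - x n))"

definition equilibrium_configuration :: "(real \<Rightarrow> real) \<Rightarrow> (int \<Rightarrow> real) \<Rightarrow> bool" where
  "equilibrium_configuration F x \<longleftrightarrow> configuration x \<and> (\<forall>n. in_equilibrium F x n)"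

definition restricted_force :: "(real \<Rightarrow> real) \<Rightarrow> (int \<Rightarrow> real) \<Rightarrow> int \<Rightarrow> int \<Rightarrow> int \<Rightarrow> real" where
  "restricted_force F x k m i =
     (\<Sum>j\<in>{k..m}. if j < i then F (x i - x j) else 0) -
     (\<Sum>j\<in>{k..m}. if j > i then F (x j - x i) else 0)"

end

theory Submission
  imports Defs
begin

text \<open>Equilibrium of particle \<open>n\<close> says that the whole left force equals the whole right force.
  Splitting both infinite sums at the block \<open>{k..m}\<close> shows that the force the block exerts on a
  member \<open>n\<close> equals the force pulling \<open>n\<close> to the right from outside the block (indices \<open>> m\<close>)
  minus the force pulling it to the left from outside (indices \<open>< k\<close>). Moving from particle \<open>i\<close>
  to particle \<open>i + 1\<close> brings it closer to every outer particle on the right and farther from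
  every outer particle on the left, so, \<open>F\<close> being decreasing, the first term grows and the
  second shrinks.\<close>

lemma in_equilibrium_summable_left:
  assumes "in_equilibrium F x n" "k \<le> n"
  shows "(\<lambda>j. F (x n - x j)) summable_on {..<k}"
  using assms unfolding in_equilibrium_def
  by (auto intro: summable_on_subset_banach)

lemma in_equilibrium_summable_right:
  assumes "in_equilibrium F x n" "n \<le> m"
  shows "(\<lambda>j. F (x j - x n)) summable_on {m<..}"
  using assms unfolding in_equilibrium_def
  by (auto intro: summable_on_subset_banach)

lemma restricted_force_eq_outer_forces:
  assumes eq: "in_equilibrium F x n" and kn: "k \<le> n" and nm: "n \<le> m"
  shows "restricted_force F x k m n =
     (\<Sum>\<^sub>\<infinity>j\<in>{m<..}. F (x j - x n)) - (\<Sum>\<^sub>\<infinity>j\<in>{..<k}. F (x n - x j))"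
proof -
  let ?f = "\<lambda>j. F (x n - x j)" and ?g = "\<lambda>j. F (x j - x n)"
  have balance: "(\<Sum>\<^sub>\<infinity>j\<in>{..<n}. ?f j) = (\<Sum>\<^sub>\<infinity>j\<in>{n<..}. ?g j)"
    using eq unfolding in_equilibrium_def by simp
  have split_left: "{..<n} = {..<k} \<union> {k..<n}" using kn by auto
  have left: "(\<Sum>\<^sub>\<infinity>j\<in>{..<n}. ?f j) = (\<Sum>\<^sub>\<infinity>j\<in>{..<k}. ?f j) + sum ?f {k..<n}"
    unfolding split_left
    by (subst infsum_Un_disjoint) (use in_equilibrium_summable_left[OF eq kn] in auto)
  have split_right: "{n<..} = {n<..m} \<union> {m<..}" using nm by auto
  have right: "(\<Sum>\<^sub>\<infinity>j\<in>{n<..}. ?g j) = sum ?g {n<..m} + (\<Sum>\<^sub>\<infinity>j\<in>{m<..}. ?g j)"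
    unfolding split_right
    by (subst infsum_Un_disjoint) (use in_equilibrium_summable_right[OF eq nm] in auto)
  have "{j\<in>{k..m}. j < n} = {k..<n}" "{j\<in>{k..m}. n < j} = {n<..m}"
    using kn nm by auto
  then have "restricted_force F x k m n = sum ?f {k..<n} - sum ?g {n<..m}"
    unfolding restricted_force_def by (simp add: sum.inter_filter[symmetric])
  with balance left right show ?thesis by linarith
qed

lemma infsum_force_antimono:
  fixes F :: "real \<Rightarrow> real"
  assumes antimono: "\<And>a b. 0 < a \<Longrightarrow> a \<le> b \<Longrightarrow> F b \<le> F a"
    and "\<And>j. j \<in> A \<Longrightarrow> 0 < d j" "\<And>j. j \<in> A \<Longrightarrow> d j \<le> d' j"
    and "(\<lambda>j. F (d j)) summable_on A" "(\<lambda>j. F (d' j)) summable_on A"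
  shows "(\<Sum>\<^sub>\<infinity>j\<in>A. F (d' j)) \<le> (\<Sum>\<^sub>\<infinity>j\<in>A. F (d j))"
  using assms by (intro infsum_mono) auto

theorem mainTheorem6:
  fixes F :: "real \<Rightarrow> real" and x :: "int \<Rightarrow> real" and k m :: int
  assumes pos: "\<And>a. 0 < a \<Longrightarrow> 0 < F a"
    and decr: "\<And>a b. 0 < a \<Longrightarrow> a < b \<Longrightarrow> F b < F a"
    and eq: "equilibrium_configuration F x"
    and km: "k \<le> m"
  shows "\<forall>i. k \<le> i \<and> i < m \<longrightarrow> restricted_force F x k m i \<le> restricted_force F x k m (i + 1)"
proof (intro allI impI)
  fix i assume i: "k \<le> i \<and> i < m"
  have mono: "strict_mono x" and equil: "\<And>n. in_equilibrium F x n"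
    using eq unfolding equilibrium_configuration_def configuration_def by auto
  have antimono: "\<And>a b. 0 < a \<Longrightarrow> a \<le> b \<Longrightarrow> F b \<le> F a"
    using decr by (metis order_le_less order_refl)
  have "x i < x (i + 1)" using mono by (simp add: strict_mono_def)
  moreover have "\<And>j. j < k \<Longrightarrow> x j < x i" "\<And>j. m < j \<Longrightarrow> x (i + 1) < x j"
    using mono i by (simp_all add: strict_mono_def)
  ultimately have
    "(\<Sum>\<^sub>\<infinity>j\<in>{..<k}. F (x (i + 1) - x j)) \<le> (\<Sum>\<^sub>\<infinity>j\<in>{..<k}. F (x i - x j))"
    "(\<Sum>\<^sub>\<infinity>j\<in>{m<..}. F (x j - x i)) \<le> (\<Sum>\<^sub>\<infinity>j\<in>{m<..}. F (x j - x (i + 1)))"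
    using i by (intro infsum_force_antimono antimono in_equilibrium_summable_left
        in_equilibrium_summable_right equil; force)+
  then show "restricted_force F x k m i \<le> restricted_force F x k m (i + 1)"
    using i restricted_force_eq_outer_forces[OF equil] by simp
qed

end
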